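(* Let $(X_1,X_2)$ be an extensible pair and let $\gamma\in\mathcal H_2$ with $|\gamma|_{(X_1,X_2)}=0$; put $l=\mathrm{ls}(\gamma)$, $r=\mathrm{rs}(\gamma)$. Then there exist integers $b_i$ ($1\le i\le l-1$), $c_i$ ($1\le i\le r-1$) and $s$ such that for all $k\ge l+r-d_1-d_2$, $$\gamma^{(k)}=\sum_{p\in Z_k,\ i(p)\le l-1}b_{i(p)}\alpha_p+\sum_{p\in Z_k,\ i(p)\ge l,\ \bar\imath(p)\ge r}s\,\alpha_p+\sum_{p\in Z_k,\ \bar\imath(p)\le r-1}c_{\bar\imath(p)}\alpha_p.$$
   Context: Marked Dynkin diagram $(X,\xi)$: Dynkin diagram of a symmetrizable generalized Cartan matrix $C(X)$ with distinguished node $\xi$; $\det X=\det C(X)$; $X(-1)$ is $X$ minus $\xi$ ($\det\emptyset=1$); $\Delta_X=\det X-\det X(-1)$. $(X_1,X_2)$ is an extensible pair if $\det X_i\ne0$, $\Delta_i:=\Delta_{X_i}\ne0$, $\gcd(\det X_i,\Delta_i)=1$ ($i=1,2$), $\gcd(\Delta_1,\Delta_2)=1$. $Z_k$ is obtained from the disjoint union of $X_1$, a path $A_k$ (nodes $1,\dots,k$) and $X_2$ by adding simple edges $\xi_1$—$1$ and $k$—$\xi_2$; $\omega_p,\alpha_p$ are fundamental weights and simple roots of $\mathfrak g(Z_k)$. Numberings: if $X$ has $d$ nodes, a numbering is a bijection $\epsilon:N(X)\to\{1,\dots,d\}$ with $\epsilon(\xi)=d$. $X(m)$ ($m\ge0$)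 is $X$ with a path of $m$ new nodes $\xi-1-\cdots-m$ attached at $\xi$, numbered by $j(p)=\epsilon(p)$ on $X$ and $j=d+t$ on the $t$-th new node; $\bar\omega^{(m)}$ is the fundamental weight of $\mathfrak g(X(m))$ at the node with $j=d+m$. For extensible $X$ ($\det X\ne0$, $\Delta_X\ne0$, $\gcd(\det X,\Delta_X)=1$) there is (by earlier work of Kleber and the author) a unique integer sequence $(a_i)_{i\ge1}$ with $-\Delta_X\omega_p-a_{j(p)}\bar\omega^{(m)}\in Q(X(m))$ for all $m\ge0$ with $\det X(m)\ne0$ and all $p\in X(m)$. Fix numberings $\epsilon_1,\epsilon_2$ of $X_1,X_2$ ($d_i$ nodes) with sequences $(a_i^{(1)}),(a_i^{(2)})$. On $Z_k$: $i(p)=\epsilon_1(p)$ on $X_1$, $i=d_1+t$ on the $t$-th node of $A_k$, $i(p)=d_1+d_2+k+1-\epsilon_2(p)$ on $X_2$; $\bar\imath(p)=\epsilon_2(p)$ on $X_2$, $\bar\imath=d_2+k+1-t$ on the $t$-th node of $A_k$, $\bar\imath(p)=d_1+d_2+k+1-\epsilon_1(p)$ on $X_1$. $\mathcal H_1$: finitely supported integer sequences $x=(x_1,x_2,\dots)$, $\ell(x)=\max\{i:x_i\ne0\}$; $\mathcal H_2=\mathcal H_1\times\mathcal H_1$. For $\gamma=(x,y)$: $\mathrm{ls}(\gamma)=\max(\ell(x),d_1)$, $\mathrm{rs}(\gamma)=\max(\ell(y),d_2)$, $\ell(\gamma)=\mathrm{ls}+\mathrm{rs}$, and for $k\ge\ell(\gamma)-d_1-d_2$,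 $\gamma^{(k)}=\sum_{p\in Z_k}(x_{i(p)}+y_{\bar\imath(p)})\omega_p$. Number of boxes: $|\gamma|_{(X_1,X_2)}=\Delta_2\sum_ix_ia_i^{(1)}-\Delta_1\sum_iy_ia_i^{(2)}$. *)

theory Defs
  imports Main "Jordan_Normal_Form.Determinant"
begin

(* Nodes of a diagram with d nodes are identified with 1..d via the numbering;
   the distinguished (marked) node xi is node d. *)
type_synonym gcm = "nat \<Rightarrow> nat \<Rightarrow> int"

definition sym_gcm :: "nat \<Rightarrow> gcm \<Rightarrow> bool" where
  "sym_gcm d C \<longleftrightarrow>
     (\<forall>i\<in>{1..d}. C i i = 2) \<and>
     (\<forall>i\<in>{1..d}. \<forall>j\<in>{1..d}. i \<noteq> j \<longrightarrow> C i j \<le> 0 \<and> (C i j = 0 \<longleftrightarrow> C j i = 0)) \<and>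
     (\<exists>e::nat \<Rightarrow> rat. (\<forall>i\<in>{1..d}. e i > 0) \<and>
        (\<forall>i\<in>{1..d}. \<forall>j\<in>{1..d}. e i * of_int (C i j) = e j * of_int (C j i)))"

definition marked_diagram :: "nat \<Rightarrow> gcm \<Rightarrow> bool" where
  "marked_diagram d C \<longleftrightarrow> d \<ge> 1 \<and> sym_gcm d C"

(* determinant of the Cartan matrix restricted to nodes 1..n (det of empty = 1) *)
definition cdet :: "nat \<Rightarrow> gcm \<Rightarrow> int" where
  "cdet n C = det (mat n n (\<lambda>(i, j). C (i + 1) (j + 1)))"

(* Delta_X = det X - det X(-1), X(-1) = X minus the marked node d *)
definition Delta :: "nat \<Rightarrow> gcm \<Rightarrow> int" where
  "Delta d C = cdet d C - cdet (d - 1) C"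

definition extensible :: "nat \<Rightarrow> gcm \<Rightarrow> bool" where
  "extensible d C \<longleftrightarrow> cdet d C \<noteq> 0 \<and> Delta d C \<noteq> 0 \<and> gcd (cdet d C) (Delta d C) = 1"

(* X(m): path of m new nodes d+1,...,d+m attached at the marked node d *)
definition ext_mat :: "nat \<Rightarrow> gcm \<Rightarrow> nat \<Rightarrow> gcm" where
  "ext_mat d C m = (\<lambda>i j. if i \<le> d \<and> j \<le> d then C i j
      else if i = j then 2
      else if (i + 1 = j \<or> j + 1 = i) \<and> d \<le> min i j then -1 else 0)"

(* Weights are integer coordinate vectors w.r.t. fundamental weights (w q = coefficient of omega_q);
   the simple root alpha_p is sum_q C q p omega_q. Membership in the root lattice Q: *)
definition in_root_lattice :: "nat \<Rightarrow> gcm \<Rightarrow> (nat \<Rightarrow> int) \<Rightarrow> bool" where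
  "in_root_lattice n C w \<longleftrightarrow> (\<exists>z::nat \<Rightarrow> int. \<forall>q\<in>{1..n}. w q = (\<Sum>p=1..n. C q p * z p))"

definition is_a_seq :: "nat \<Rightarrow> gcm \<Rightarrow> (nat \<Rightarrow> int) \<Rightarrow> bool" where
  "is_a_seq d C a \<longleftrightarrow>
     (\<forall>m. cdet (d + m) (ext_mat d C m) \<noteq> 0 \<longrightarrow>
        (\<forall>p\<in>{1..d+m}. in_root_lattice (d + m) (ext_mat d C m)
           (\<lambda>q. - Delta d C * (if q = p then 1 else 0) - a p * (if q = d + m then 1 else 0))))"

(* Z_k, nodes numbered by i : 1..d1+d2+k; X_2 node with numbering e corresponds to i = n+1-e *)
definition Z_mat :: "nat \<Rightarrow> gcm \<Rightarrow> nat \<Rightarrow> gcm \<Rightarrow> nat \<Rightarrow> gcm" where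
  "Z_mat d1 C1 d2 C2 k = (\<lambda>i j.
     let n = d1 + d2 + k in
     if i \<le> d1 \<and> j \<le> d1 then C1 i j
     else if d1 + k < i \<and> d1 + k < j then C2 (n + 1 - i) (n + 1 - j)
     else if i = j then 2
     else if i + 1 = j \<or> j + 1 = i then -1 else 0)"

(* H_1: finitely supported integer sequences x_1, x_2, ... (x 0 unused, set to 0) *)
definition H1 :: "(nat \<Rightarrow> int) \<Rightarrow> bool" where
  "H1 x \<longleftrightarrow> finite {i. x i \<noteq> 0} \<and> x 0 = 0"

definition ell :: "(nat \<Rightarrow> int) \<Rightarrow> nat" where
  "ell x = Max (insert 0 {i. x i \<noteq> 0})"

definition boxes :: "nat \<Rightarrow> gcm \<Rightarrow> (nat \<Rightarrow> int) \<Rightarrow> nat \<Rightarrow> gcm \<Rightarrow> (nat \<Rightarrow> int)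
     \<Rightarrow> (nat \<Rightarrow> int) \<Rightarrow> (nat \<Rightarrow> int) \<Rightarrow> int" where
  "boxes d1 C1 a1 d2 C2 a2 x y =
     Delta d2 C2 * (\<Sum>i=1..ell x. x i * a1 i) - Delta d1 C1 * (\<Sum>i=1..ell y. y i * a2 i)"

(* gamma^(k) as coordinates w.r.t. fundamental weights, indexed by i(p) in 1..n;
   ibar(p) = n+1-i(p) *)
definition gamma_k :: "nat \<Rightarrow> nat \<Rightarrow> nat \<Rightarrow> (nat \<Rightarrow> int) \<Rightarrow> (nat \<Rightarrow> int) \<Rightarrow> nat \<Rightarrow> int" where
  "gamma_k d1 d2 k x y = (\<lambda>q. x q + y (d1 + d2 + k + 1 - q))"

end

theory Submission
  imports Defs
begin

text \<open>As \<open>|\<gamma>| = 0\<close> and \<open>\<Delta>\<^sub>1, \<Delta>\<^sub>2\<close> are coprime, there is a single integer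
  \<open>s\<close> with \<open>\<Sum> x\<^sub>i a1\<^sub>i = s \<Delta>\<^sub>1\<close> and \<open>\<Sum> y\<^sub>i a2\<^sub>i = s \<Delta>\<^sub>2\<close>, and each side can be treated
  separately in the diagram \<open>X\<close> with an infinite path attached at \<open>\<xi>\<close>.

  Lowering the corner entry of \<open>X(l - d)\<close> by one gives a matrix of determinant \<open>\<Delta>\<close>, so
  \<open>\<Delta> x\<close> is an integral combination \<open>v\<close> of its columns; continued constantly along the
  path, \<open>v\<close> represents \<open>\<Delta> x + \<sigma> \<omega>\<^sub>L\<close> in every \<open>X(L - d)\<close>, \<open>L\<close> being the last node. By
  the \<open>a\<close>-sequence property \<open>-\<Delta> x - s \<Delta> \<omega>\<^sub>L\<close> lies in the root lattice, so Cramer's rule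
  in the last coordinate shows that \<open>det X(m) = det X + m \<Delta>\<close> divides \<open>\<sigma> - s \<Delta>\<close> for all
  large \<open>m\<close>; hence \<open>\<sigma> = s \<Delta>\<close>. Cramer's rule once more, with \<open>gcd (det X(m), \<Delta>) = 1\<close>,
  shows that \<open>\<Delta>\<close> divides \<open>v\<close>, and \<open>v / \<Delta>\<close> consists of the coefficients \<open>b\<close> followed by
  the constant tail \<open>s\<close>.

  For \<open>k \<ge> l + r - d\<^sub>1 - d\<^sub>2\<close> the rows of \<open>Z\<^sub>k\<close> where \<open>x\<close> lives only see \<open>X\<^sub>1\<close> and the path,
  those where \<open>y\<close> lives only see the reflected \<open>X\<^sub>2\<close> and the path, and the two one-sided
  solutions agree (with value \<open>s\<close>) where they meet.\<close>

definition principal_mat :: "nat \<Rightarrow> gcm \<Rightarrow> int mat" where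
  "principal_mat n F = mat n n (\<lambda>(i, j). F (Suc i) (Suc j))"

lemma principal_mat_carrier [simp]: "principal_mat n F \<in> carrier_mat n n"
  and dim_principal_mat [simp]: "dim_row (principal_mat n F) = n" "dim_col (principal_mat n F) = n"
  by (simp_all add: principal_mat_def)

lemma cdet_eq_det_principal_mat: "cdet n F = det (principal_mat n F)"
  by (simp add: cdet_def principal_mat_def)

lemma principal_mat_cong:
  assumes "\<And>i j. i \<in> {1..n} \<Longrightarrow> j \<in> {1..n} \<Longrightarrow> F i j = G i j"
  shows "principal_mat n F = principal_mat n G"
  using assms by (intro eq_matI) (auto simp: principal_mat_def)

lemma mat_delete_principal_mat_last:
  "mat_delete (principal_mat (Suc n) F) n n = principal_mat n F"
  by (rule eq_matI) (auto simp: mat_delete_def principal_mat_def)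

text \<open>\<^term>\<open>gcm_app n F v q\<close> is the \<open>\<omega>\<^sub>q\<close>-coordinate of the root combination
  \<open>\<Sum>\<^sub>p v\<^sub>p \<alpha>\<^sub>p\<close>, since \<open>\<alpha>\<^sub>p = \<Sum>\<^sub>q F q p \<omega>\<^sub>q\<close>.\<close>

definition gcm_app :: "nat \<Rightarrow> gcm \<Rightarrow> (nat \<Rightarrow> int) \<Rightarrow> nat \<Rightarrow> int" where
  "gcm_app n F v q = (\<Sum>p=1..n. F q p * v p)"

lemma gcm_app_cong: "(\<And>p. p \<in> {1..n} \<Longrightarrow> v p = w p) \<Longrightarrow> gcm_app n F v q = gcm_app n F w q"
  by (simp add: gcm_app_def)

lemma gcm_app_add: "gcm_app n F (\<lambda>p. v p + w p) q = gcm_app n F v q + gcm_app n F w q"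
  by (simp add: gcm_app_def distrib_left sum.distrib)

lemma gcm_app_scale: "gcm_app n F (\<lambda>p. c * v p) q = c * gcm_app n F v q"
  by (simp add: gcm_app_def sum_distrib_left mult_ac)

lemma gcm_app_sum:
  "gcm_app n F (\<lambda>p. \<Sum>i\<in>I. x i * z i p) q = (\<Sum>i\<in>I. x i * gcm_app n F (z i) q)"
  unfolding gcm_app_def sum_distrib_left by (simp add: mult_ac sum.swap[of _ I])

lemma in_root_lattice_iff: "in_root_lattice n C w \<longleftrightarrow> (\<exists>z. \<forall>q\<in>{1..n}. w q = gcm_app n C z q)"
  by (simp add: in_root_lattice_def gcm_app_def)

lemma in_root_lattice_sum:
  assumes "\<And>i. i \<in> I \<Longrightarrow> in_root_lattice n C (f i)"
  shows "in_root_lattice n C (\<lambda>q. \<Sum>i\<in>I. x i * f i q)"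
proof -
  obtain z where z: "\<And>i q. i \<in> I \<Longrightarrow> q \<in> {1..n} \<Longrightarrow> f i q = gcm_app n C (z i) q"
    using assms unfolding in_root_lattice_iff by metis
  show ?thesis
    unfolding in_root_lattice_iff
    by (rule exI[of _ "\<lambda>p. \<Sum>i\<in>I. x i * z i p"]) (simp add: gcm_app_sum z)
qed

lemma principal_mat_mult_vec:
  assumes "j < n"
  shows "(principal_mat n F *\<^sub>v vec n (\<lambda>i. v (Suc i))) $ j = gcm_app n F v (Suc j)"
  using assms
  by (simp add: principal_mat_def gcm_app_def scalar_prod_def sum.atLeast1_atMost_eq atLeast0LessThan)

lemma cramer:
  assumes sol: "\<forall>q\<in>{1..n}. gcm_app n F v q = y q" and p: "p \<in> {1..n}"
  shows "det (principal_mat n F) * v p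
    = (\<Sum>q=1..n. adj_mat (principal_mat n F) $$ (p - 1, q - 1) * y q)"
proof -
  let ?A = "principal_mat n F" and ?v = "vec n (\<lambda>i. v (Suc i))" and ?y = "vec n (\<lambda>i. y (Suc i))"
  have adj: "adj_mat ?A \<in> carrier_mat n n" "adj_mat ?A * ?A = det ?A \<cdot>\<^sub>m 1\<^sub>m n"
    using adj_mat[OF principal_mat_carrier] by auto
  have "?A *\<^sub>v ?v = ?y"
  proof (rule eq_vecI)
    fix j assume "j < dim_vec ?y"
    then show "(?A *\<^sub>v ?v) $ j = ?y $ j"
      using sol principal_mat_mult_vec[of j n F v] by simp
  qed simp
  then have "adj_mat ?A *\<^sub>v ?y = (adj_mat ?A * ?A) *\<^sub>v ?v"
    using assoc_mult_mat_vec[OF adj(1) principal_mat_carrier] by simp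
  also have "\<dots> = det ?A \<cdot>\<^sub>v ?v"
    unfolding adj(2) by (intro eq_vecI) (auto simp: row_smult)
  finally have "(adj_mat ?A *\<^sub>v ?y) $ (p - 1) = (det ?A \<cdot>\<^sub>v ?v) $ (p - 1)"
    by simp
  moreover have "p - 1 < n" "Suc (p - 1) = p"
    using p by auto
  ultimately show ?thesis
    using adj(1) by (simp add: scalar_prod_def sum.atLeast1_atMost_eq atLeast0LessThan)
qed

lemma exists_gcm_app_eq_det_mult:
  "\<exists>v. \<forall>q\<in>{1..n}. gcm_app n F v q = det (principal_mat n F) * y q"
proof -
  let ?A = "principal_mat n F" and ?y = "vec n (\<lambda>i. y (Suc i))"
  have adj: "adj_mat ?A \<in> carrier_mat n n" "?A * adj_mat ?A = det ?A \<cdot>\<^sub>m 1\<^sub>m n"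
    using adj_mat[OF principal_mat_carrier] by auto
  define u where "u = adj_mat ?A *\<^sub>v ?y"
  have "?A *\<^sub>v u = (?A * adj_mat ?A) *\<^sub>v ?y"
    unfolding u_def by (rule assoc_mult_mat_vec[symmetric, OF principal_mat_carrier adj(1)]) simp
  also have "\<dots> = det ?A \<cdot>\<^sub>v ?y"
    unfolding adj(2) by (intro eq_vecI) (auto simp: row_smult)
  finally have Au: "?A *\<^sub>v u = det ?A \<cdot>\<^sub>v ?y" .
  have u: "u = vec n (\<lambda>i. u $ i)"
    using adj(1) by (auto simp: u_def)
  show ?thesis
  proof (intro exI ballI)
    fix q assume q: "q \<in> {1..n}"
    then have "q - 1 < n" "Suc (q - 1) = q"
      by auto
    then show "gcm_app n F (\<lambda>p. u $ (p - 1)) q = det ?A * y q"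
      using Au u principal_mat_mult_vec[of "q - 1" n F "\<lambda>p. u $ (p - 1)"] by simp
  qed
qed

lemma adj_mat_principal_mat_last:
  assumes "1 \<le> n"
  shows "adj_mat (principal_mat n F) $$ (n - 1, n - 1) = det (principal_mat (n - 1) F)"
proof -
  obtain k where "n = Suc k"
    using assms by (cases n) auto
  then show ?thesis
    using mat_delete_principal_mat_last[of k F]
    by (simp add: adj_mat_def cofactor_def principal_mat_def)
qed

lemma cramer_last:
  assumes "\<forall>q\<in>{1..n}. gcm_app n F v q = (if q = n then c else 0)" "1 \<le> n"
  shows "det (principal_mat n F) * v n = det (principal_mat (n - 1) F) * c"
  using cramer[OF assms(1), of n] assms(2) adj_mat_principal_mat_last[OF assms(2)]
  by (simp add: if_distrib sum.delta cong: if_cong)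

lemma dvd_solution_if_coprime_det:
  assumes "\<forall>q\<in>{1..n}. gcm_app n F v q = D * y q" "coprime (det (principal_mat n F)) D"
    and "p \<in> {1..n}"
  shows "D dvd v p"
proof -
  have "D dvd det (principal_mat n F) * v p"
    unfolding cramer[OF assms(1,3)] by (rule dvd_sum) simp
  then show ?thesis
    using assms(2) by (simp add: coprime_commute coprime_dvd_mult_right_iff)
qed

definition shift_corner :: "nat \<Rightarrow> int \<Rightarrow> gcm \<Rightarrow> gcm" where
  "shift_corner n t F = (\<lambda>i j. if i = n \<and> j = n then F i j + t else F i j)"

lemma det_principal_mat_shift_corner:
  "det (principal_mat (Suc n) (shift_corner (Suc n) t F))
     = det (principal_mat (Suc n) F) + t * det (principal_mat n F)"
proof -
  let ?A = "principal_mat (Suc n) F" and ?B = "principal_mat (Suc n) (shift_corner (Suc n) t F)"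
  have cofactor_eq: "cofactor ?B n j = cofactor ?A n j" for j
    unfolding cofactor_def
    by (rule arg_cong[where f = "\<lambda>M. _ * det M"], rule eq_matI)
      (auto simp: mat_delete_def principal_mat_def shift_corner_def)
  have entry_eq: "?B $$ (n, j) = ?A $$ (n, j) + (if j = n then t else 0)" if "j < Suc n" for j
    using that by (auto simp: principal_mat_def shift_corner_def)
  have "det ?B = (\<Sum>j<Suc n. ?B $$ (n, j) * cofactor ?B n j)"
    by (rule laplace_expansion_row) auto
  also have "\<dots> = (\<Sum>j<Suc n. ?A $$ (n, j) * cofactor ?A n j)
      + (\<Sum>j<Suc n. (if j = n then t else 0) * cofactor ?A n j)"
    by (simp add: cofactor_eq entry_eq distrib_right sum.distrib)
  also have "(\<Sum>j<Suc n. ?A $$ (n, j) * cofactor ?A n j) = det ?A"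
    by (rule laplace_expansion_row[symmetric]) auto
  also have "(\<Sum>j<Suc n. (if j = n then t else 0) * cofactor ?A n j) = t * det (principal_mat n F)"
    by (simp add: if_distrib sum.delta cofactor_def mat_delete_principal_mat_last)
  finally show ?thesis .
qed

text \<open>The matrix \<^term>\<open>ext_mat d C m\<close> does not depend on \<^term>\<open>m\<close>: it is the Cartan
  matrix of \<open>X\<close> with an infinite path attached at node \<open>d\<close>, and \<open>X(m)\<close> is its
  principal part of size \<open>d + m\<close>.\<close>

abbreviation ext_path :: "nat \<Rightarrow> gcm \<Rightarrow> gcm" where
  "ext_path d C \<equiv> ext_mat d C 0"

lemma ext_mat_eq_ext_path: "ext_mat d C m = ext_path d C"
  by (simp add: ext_mat_def)

lemma principal_mat_ext_path_le: "n \<le> d \<Longrightarrow> principal_mat n (ext_path d C) = principal_mat n C"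
  by (rule principal_mat_cong) (auto simp: ext_mat_def)

lemma det_shift_corner_ext_path_Suc:
  assumes "d \<le> n" "1 \<le> n"
  shows "det (principal_mat (Suc n) (shift_corner (Suc n) (-1) (ext_path d C)))
    = det (principal_mat n (shift_corner n (-1) (ext_path d C)))"
proof -
  let ?A = "principal_mat (Suc n) (shift_corner (Suc n) (-1) (ext_path d C))"
  \<comment> \<open>adding the last column to the previous one turns the last row into a unit vector\<close>
  let ?B = "addcol 1 (n - 1) n ?A"
  have B_carrier: "?B \<in> carrier_mat (Suc n) (Suc n)"
    by (simp add: mat_addcol_def principal_mat_def)
  have last_row: "?B $$ (n, j) = (if j = n then 1 else 0)" if "j < Suc n" for j
    using that assms by (auto simp: mat_addcol_def principal_mat_def shift_corner_def ext_mat_def)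
  have "det ?A = det ?B"
    by (rule det_addcol[symmetric]) (use assms in auto)
  also have "\<dots> = (\<Sum>j<Suc n. ?B $$ (n, j) * cofactor ?B n j)"
    by (rule laplace_expansion_row[OF B_carrier]) auto
  also have "\<dots> = (\<Sum>j<Suc n. if j = n then cofactor ?B n n else 0)"
    by (rule sum.cong[OF refl]) (use last_row in simp)
  also have "\<dots> = cofactor ?B n n"
    by simp
  also have "\<dots> = det (mat_delete ?B n n)"
    by (simp add: cofactor_def)
  also have "mat_delete ?B n n = principal_mat n (shift_corner n (-1) (ext_path d C))"
    by (rule eq_matI) (use assms in \<open>auto simp: mat_delete_def mat_addcol_def principal_mat_def
          shift_corner_def ext_mat_def\<close>)
  finally show ?thesis .
qed

lemma det_shift_corner_ext_path:
  assumes "1 \<le> d" "d \<le> n"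
  shows "det (principal_mat n (shift_corner n (-1) (ext_path d C))) = Delta d C"
  using assms(2)
proof (induction n rule: dec_induct)
  case base
  obtain k where "d = Suc k"
    using assms(1) by (cases d) auto
  then show ?case
    using det_principal_mat_shift_corner[of k "-1" "ext_path d C"]
      principal_mat_ext_path_le[of d d C] principal_mat_ext_path_le[of k d C]
    by (simp add: Delta_def cdet_eq_det_principal_mat)
next
  case (step n)
  then show ?case
    using det_shift_corner_ext_path_Suc[of d n C] assms(1) by simp
qed

lemma cdet_ext_path:
  assumes "1 \<le> d"
  shows "cdet (d + m) (ext_path d C) = cdet d C + int m * Delta d C"
proof (induction m)
  case 0
  then show ?case
    by (simp add: cdet_eq_det_principal_mat principal_mat_ext_path_le)
next
  case (Suc m)
  then show ?case
    using Suc det_principal_mat_shift_corner[of "d + m" "-1" "ext_path d C"]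
      det_shift_corner_ext_path[OF assms, of "Suc (d + m)" C]
    by (simp add: cdet_eq_det_principal_mat algebra_simps)
qed

lemma coprime_cdet_ext_path_Delta:
  assumes "1 \<le> d" "extensible d C"
  shows "coprime (cdet (d + m) (ext_path d C)) (Delta d C)"
  using assms gcd_add_mult[of "Delta d C" "int m" "cdet d C"]
  by (simp add: cdet_ext_path extensible_def coprime_iff_gcd_eq_1 gcd.commute add.commute)

lemma coprime_cdet_ext_path_Suc:
  assumes "1 \<le> d" "extensible d C"
  shows "coprime (cdet (d + Suc m) (ext_path d C)) (cdet (d + m) (ext_path d C))"
proof -
  have "cdet (d + Suc m) (ext_path d C) = Delta d C + cdet (d + m) (ext_path d C)"
    using cdet_ext_path[OF assms(1), of "Suc m" C] cdet_ext_path[OF assms(1), of m C]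
    by (simp add: algebra_simps)
  then show ?thesis
    using coprime_cdet_ext_path_Delta[OF assms, of m]
    by (metis coprime_commute coprime_iff_gcd_eq_1 gcd_add1)
qed

lemma ext_path_row:
  assumes "1 \<le> d" "d < q"
  shows "ext_path d C q p = (if p = q then 2 else if p = q - 1 \<or> p = q + 1 then -1 else 0)"
  using assms by (auto simp: ext_mat_def)

lemma gcm_app_ext_path_const:
  assumes "1 \<le> d" "d < q" "q \<le> N" "\<And>p. q - 1 \<le> p \<Longrightarrow> v p = \<sigma>"
  shows "gcm_app N (ext_path d C) v q = (if q = N then \<sigma> else 0)"
proof -
  have "gcm_app N (ext_path d C) v q = (\<Sum>p=1..N. (if p = q then 2 * \<sigma> else 0)
      + (if p = q - 1 then - \<sigma> else 0) + (if p = q + 1 then - \<sigma> else 0))"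
    unfolding gcm_app_def by (rule sum.cong[OF refl]) (use assms in \<open>auto simp: ext_path_row\<close>)
  also have "\<dots> = 2 * \<sigma> - \<sigma> - (if q + 1 \<le> N then \<sigma> else 0)"
  proof -
    have "q \<in> {1..N}" "q - 1 \<in> {1..N}" "q + 1 \<noteq> q - 1"
      using assms(1-3) by auto
    then show ?thesis
      by (simp add: sum.distrib)
  qed
  also have "\<dots> = (if q = N then \<sigma> else 0)"
    using assms(3) by auto
  finally show ?thesis .
qed

lemma gcm_app_ext_path_truncate:
  assumes "d \<le> K" "q \<le> K" "K < N"
  shows "gcm_app N (ext_path d C) v q = gcm_app (Suc K) (ext_path d C) v q"
  unfolding gcm_app_def by (rule sum.mono_neutral_right) (use assms in \<open>auto simp: ext_mat_def\<close>)

lemma ext_path_tail_solution: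
  assumes d: "1 \<le> d" "d \<le> l" and supp: "\<forall>q>l. x q = 0"
  obtains v \<sigma> where "\<And>p. l \<le> p \<Longrightarrow> v p = \<sigma>"
    and "\<And>L q. l \<le> L \<Longrightarrow> q \<in> {1..L} \<Longrightarrow>
      gcm_app L (ext_path d C) v q = Delta d C * x q + (if q = L then \<sigma> else 0)"
proof -
  let ?E = "ext_path d C"
  obtain u where u: "\<forall>q\<in>{1..l}. gcm_app l (shift_corner l (-1) ?E) u q = Delta d C * x q"
    using exists_gcm_app_eq_det_mult[of l "shift_corner l (-1) ?E" x]
    unfolding det_shift_corner_ext_path[OF d] by blast
  define v where "v p = (if p \<le> l then u p else u l)" for p
  have tail: "v p = u l" if "l \<le> p" for p
    using that by (simp add: v_def)
  have at_l: "gcm_app l ?E v q = Delta d C * x q + (if q = l then u l else 0)" if q: "q \<in> {1..l}" for q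
  proof -
    have "gcm_app l ?E v q = (\<Sum>p=1..l. shift_corner l (-1) ?E q p * u p
        + (if p = l then if q = l then u l else 0 else 0))"
      unfolding gcm_app_def by (rule sum.cong[OF refl]) (auto simp: shift_corner_def v_def algebra_simps)
    also have "\<dots> = Delta d C * x q + (if q = l then u l else 0)"
      using u q d by (simp add: sum.distrib gcm_app_def)
    finally show ?thesis .
  qed
  have "gcm_app L ?E v q = Delta d C * x q + (if q = L then u l else 0)"
    if L: "l \<le> L" and q: "q \<in> {1..L}" for L q
  proof (cases "q \<le> l")
    case True
    show ?thesis
    proof (cases "L = l")
      case False
      then have "gcm_app L ?E v q = gcm_app (Suc l) ?E v q"
        using True L d by (intro gcm_app_ext_path_truncate) auto
      also have "\<dots> = gcm_app l ?E v q + ?E q (Suc l) * v (Suc l)"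
        by (simp add: gcm_app_def)
      also have "?E q (Suc l) = (if q = l then -1 else 0)"
        using True d by (auto simp: ext_mat_def)
      finally show ?thesis
        using at_l[of q] True q False L tail[of "Suc l"] by auto
    qed (use at_l q in simp)
  next
    case False
    then show ?thesis
      using gcm_app_ext_path_const[of d q L v "u l" C] supp d q tail by auto
  qed
  with tail show ?thesis
    using that by blast
qed

lemma cdet_ext_path_dvd_tail_defect:
  assumes d: "1 \<le> d" "d \<le> l" and ext: "extensible d C" and aseq: "is_a_seq d C a"
    and supp: "\<forall>q>l. x q = 0" and s: "(\<Sum>i=1..l. x i * a i) = s * Delta d C"
    and tail: "\<And>L q. l \<le> L \<Longrightarrow> q \<in> {1..L} \<Longrightarrow>
      gcm_app L (ext_path d C) v q = Delta d C * x q + (if q = L then \<sigma> else 0)"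
    and m: "l \<le> d + Suc m" and nz: "cdet (d + Suc m) (ext_path d C) \<noteq> 0"
  shows "cdet (d + Suc m) (ext_path d C) dvd \<sigma> - s * Delta d C"
proof -
  let ?E = "ext_path d C" and ?D = "Delta d C" and ?L = "d + Suc m"
  let ?e = "\<lambda>i q. if q = i then 1 else 0"
  have "in_root_lattice ?L ?E (\<lambda>q. - ?D * ?e p q - a p * ?e ?L q)" if "p \<in> {1..l}" for p
    using aseq[unfolded is_a_seq_def, rule_format, of "Suc m" p] nz that m
      ext_mat_eq_ext_path[of d C "Suc m"]
    by simp
  then have "in_root_lattice ?L ?E (\<lambda>q. \<Sum>p\<in>{1..l}. x p * (- ?D * ?e p q - a p * ?e ?L q))"
    by (rule in_root_lattice_sum)
  then obtain w where w: "\<forall>q\<in>{1..?L}.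
      (\<Sum>p\<in>{1..l}. x p * (- ?D * ?e p q - a p * ?e ?L q)) = gcm_app ?L ?E w q"
    unfolding in_root_lattice_iff by blast
  have combination: "(\<Sum>p\<in>{1..l}. x p * (- ?D * ?e p q - a p * ?e ?L q))
      = - ?D * x q - (if q = ?L then s * ?D else 0)" if "1 \<le> q" for q
  proof -
    have "(\<Sum>p\<in>{1..l}. x p * ?e p q) = (\<Sum>p\<in>{1..l}. if p = q then x q else 0)"
      by (rule sum.cong) auto
    also have "\<dots> = x q"
      using supp that by (cases "q \<le> l") simp_all
    finally have delta: "(\<Sum>p\<in>{1..l}. x p * ?e p q) = x q" .
    have "(\<Sum>p\<in>{1..l}. x p * (- ?D * ?e p q - a p * ?e ?L q))
        = (\<Sum>p\<in>{1..l}. - ?D * (x p * ?e p q) - ?e ?L q * (x p * a p))"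
      by (rule sum.cong) (simp_all add: algebra_simps)
    also have "\<dots> = - ?D * (\<Sum>p\<in>{1..l}. x p * ?e p q) - ?e ?L q * (\<Sum>p\<in>{1..l}. x p * a p)"
      by (simp add: sum_subtractf sum_distrib_left)
    finally show ?thesis
      using delta s by (simp add: mult.commute)
  qed
  have "\<forall>q\<in>{1..?L}. gcm_app ?L ?E (\<lambda>p. w p + v p) q = (if q = ?L then \<sigma> - s * ?D else 0)"
  proof
    fix q assume q: "q \<in> {1..?L}"
    then show "gcm_app ?L ?E (\<lambda>p. w p + v p) q = (if q = ?L then \<sigma> - s * ?D else 0)"
      using w combination[of q] tail[OF m q] by (simp add: gcm_app_add)
  qed
  from cramer_last[OF this]
  have "cdet ?L ?E * (w ?L + v ?L) = cdet (d + m) ?E * (\<sigma> - s * ?D)"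
    by (simp add: cdet_eq_det_principal_mat)
  then have "cdet ?L ?E dvd cdet (d + m) ?E * (\<sigma> - s * ?D)"
    by (metis dvd_triv_left)
  then show ?thesis
    using coprime_cdet_ext_path_Suc[OF d(1) ext, of m] by (simp add: coprime_dvd_mult_right_iff)
qed

lemma tail_value_eq:
  assumes d: "1 \<le> d" "d \<le> l" and ext: "extensible d C" and aseq: "is_a_seq d C a"
    and supp: "\<forall>q>l. x q = 0" and s: "(\<Sum>i=1..l. x i * a i) = s * Delta d C"
    and tail: "\<And>L q. l \<le> L \<Longrightarrow> q \<in> {1..L} \<Longrightarrow>
      gcm_app L (ext_path d C) v q = Delta d C * x q + (if q = L then \<sigma> else 0)"
  shows "\<sigma> = s * Delta d C"
proof -
  define c where "c = \<sigma> - s * Delta d C"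
  \<comment> \<open>large enough that \<open>|det X(m + 1)| = |det X + (m + 1) \<Delta>| > |c|\<close> and \<open>l \<le> d + m + 1\<close>\<close>
  define m where "m = nat \<bar>c\<bar> + nat \<bar>cdet d C\<bar> + l"
  have "\<bar>Delta d C\<bar> \<ge> 1"
    using ext by (auto simp: extensible_def)
  then have "int (Suc m) \<le> \<bar>int (Suc m) * Delta d C\<bar>"
    by (simp add: abs_mult)
  then have large: "\<bar>c\<bar> < \<bar>cdet (d + Suc m) (ext_path d C)\<bar>"
    unfolding cdet_ext_path[OF d(1)] m_def by linarith
  have "cdet (d + Suc m) (ext_path d C) dvd c"
    unfolding c_def using large m_def
    by (intro cdet_ext_path_dvd_tail_defect[OF d ext aseq supp s tail]) auto
  with large have "c = 0"
    by (metis dvd_imp_le_int abs_ge_zero le_less_trans not_less)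
  then show ?thesis
    by (simp add: c_def)
qed

lemma ext_path_root_combination:
  assumes d: "1 \<le> d" "d \<le> l" and ext: "extensible d C" and aseq: "is_a_seq d C a"
    and supp: "\<forall>q>l. x q = 0" and s: "(\<Sum>i=1..l. x i * a i) = s * Delta d C"
  obtains b where "\<And>N q. l < N \<Longrightarrow> q \<in> {1..N - 1} \<Longrightarrow>
    gcm_app N (ext_path d C) (\<lambda>p. if p < l then b p else s) q = x q"
proof -
  let ?E = "ext_path d C" and ?D = "Delta d C"
  obtain v \<sigma> where const: "\<And>p. l \<le> p \<Longrightarrow> v p = \<sigma>"
    and tail: "\<And>L q. l \<le> L \<Longrightarrow> q \<in> {1..L} \<Longrightarrow>
      gcm_app L ?E v q = ?D * x q + (if q = L then \<sigma> else 0)"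
    using ext_path_tail_solution[OF d supp] by metis
  have \<sigma>: "\<sigma> = s * ?D"
    by (rule tail_value_eq[OF d ext aseq supp s tail])
  have "?D dvd v p" if "p \<in> {1..l}" for p
  proof (rule dvd_solution_if_coprime_det[OF _ _ that])
    show "\<forall>q\<in>{1..l}. gcm_app l ?E v q = ?D * (x q + (if q = l then s else 0))"
      using tail[of l] \<sigma> by (simp add: algebra_simps)
    show "coprime (det (principal_mat l ?E)) ?D"
      using coprime_cdet_ext_path_Delta[OF d(1) ext, of "l - d"] d(2)
      by (simp add: cdet_eq_det_principal_mat)
  qed
  then have v: "v p = ?D * (if p < l then v p div ?D else s)" if "1 \<le> p" for p
    using that const \<sigma> by auto
  show ?thesis
  proof (rule that)
    fix N q assume N: "l < N" and q: "q \<in> {1..N - 1}"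
    have "?D * gcm_app N ?E (\<lambda>p. if p < l then v p div ?D else s) q = gcm_app N ?E v q"
      unfolding gcm_app_scale[symmetric] by (rule gcm_app_cong) (use v in simp)
    also have "\<dots> = ?D * x q"
      using tail[of N q] N q by auto
    finally show "gcm_app N ?E (\<lambda>p. if p < l then v p div ?D else s) q = x q"
      using ext by (simp add: extensible_def)
  qed
qed

lemma Z_mat_eq_ext_path: "i \<le> d1 + k \<Longrightarrow> Z_mat d1 C1 d2 C2 k i j = ext_path d1 C1 i j"
  by (auto simp: Z_mat_def ext_mat_def Let_def)

lemma Z_mat_reflect:
  assumes "n = d1 + d2 + k" "i \<in> {1..n}" "j \<in> {1..n}"
  shows "Z_mat d1 C1 d2 C2 k i j = Z_mat d2 C2 d1 C1 k (n + 1 - i) (n + 1 - j)"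
proof -
  have n: "d1 + d2 + k = n" "d2 + d1 + k = n"
    and reflect: "n + 1 - (n + 1 - i) = i" "n + 1 - (n + 1 - j) = j"
    and conditions: "(n + 1 - i \<le> d2 \<and> n + 1 - j \<le> d2) \<longleftrightarrow> (d1 + k < i \<and> d1 + k < j)"
    "(d2 + k < n + 1 - i \<and> d2 + k < n + 1 - j) \<longleftrightarrow> (i \<le> d1 \<and> j \<le> d1)"
    "(n + 1 - i = n + 1 - j) \<longleftrightarrow> i = j"
    "(n + 1 - i + 1 = n + 1 - j \<or> n + 1 - j + 1 = n + 1 - i) \<longleftrightarrow> (i + 1 = j \<or> j + 1 = i)"
    using assms by auto
  show ?thesis
    unfolding Z_mat_def Let_def n reflect conditions by auto
qed

lemma gcm_app_Z_mat_reflect: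
  assumes "n = d1 + d2 + k" "q \<in> {1..n}"
  shows "gcm_app n (Z_mat d1 C1 d2 C2 k) v q
    = gcm_app n (Z_mat d2 C2 d1 C1 k) (\<lambda>p. v (n + 1 - p)) (n + 1 - q)"
proof -
  have "gcm_app n (Z_mat d1 C1 d2 C2 k) v q
      = (\<Sum>p=1..n. Z_mat d1 C1 d2 C2 k q (n + 1 - p) * v (n + 1 - p))"
    unfolding gcm_app_def using sum.atLeastAtMost_rev[of _ 1 n] by (simp add: add.commute)
  also have "\<dots> = gcm_app n (Z_mat d2 C2 d1 C1 k) (\<lambda>p. v (n + 1 - p)) (n + 1 - q)"
    unfolding gcm_app_def
  proof (intro sum.cong refl)
    fix p assume "p \<in> {1..n}"
    then have "n + 1 - (n + 1 - p) = p" "n + 1 - p \<in> {1..n}"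
      by auto
    then show "Z_mat d1 C1 d2 C2 k q (n + 1 - p) * v (n + 1 - p)
        = Z_mat d2 C2 d1 C1 k (n + 1 - q) p * v (n + 1 - p)"
      using Z_mat_reflect[OF assms(1,2), of "n + 1 - p"] by simp
  qed
  finally show ?thesis .
qed

definition two_sided :: "nat \<Rightarrow> nat \<Rightarrow> nat \<Rightarrow> (nat \<Rightarrow> int) \<Rightarrow> (nat \<Rightarrow> int) \<Rightarrow> int \<Rightarrow> nat \<Rightarrow> int"
  where "two_sided n l r b c s p =
    (if p \<le> l - 1 then b p else if n + 1 - p \<le> r - 1 then c (n + 1 - p) else s)"

lemma two_sided_reflect:
  "l + r \<le> n \<Longrightarrow> p \<in> {1..n} \<Longrightarrow> two_sided n l r b c s (n + 1 - p) = two_sided n r l c b s p"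
  by (auto simp: two_sided_def)

lemma gcm_app_Z_mat_two_sided_left:
  assumes b: "\<And>N q. l < N \<Longrightarrow> q \<in> {1..N - 1} \<Longrightarrow>
      gcm_app N (ext_path d1 C1) (\<lambda>p. if p < l then b p else s) q = x q"
    and "d1 \<le> l" "d2 \<le> r" "1 \<le> r" "l + r \<le> n" "n = d1 + d2 + k" "q \<in> {1..n - r}"
  shows "gcm_app n (Z_mat d1 C1 d2 C2 k) (two_sided n l r b c s) q = x q"
proof -
  let ?E = "ext_path d1 C1"
  have "q \<le> d1 + k"
    using assms by auto
  then have "gcm_app n (Z_mat d1 C1 d2 C2 k) (two_sided n l r b c s) q
      = gcm_app n ?E (two_sided n l r b c s) q"
    unfolding gcm_app_def by (simp add: Z_mat_eq_ext_path)
  also have "\<dots> = gcm_app (Suc (n - r)) ?E (two_sided n l r b c s) q"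
    using assms by (intro gcm_app_ext_path_truncate) auto
  also have "\<dots> = gcm_app (Suc (n - r)) ?E (\<lambda>p. if p < l then b p else s) q"
    using assms by (intro gcm_app_cong) (auto simp: two_sided_def)
  also have "\<dots> = x q"
    using assms by (intro b) auto
  finally show ?thesis .
qed

lemma gcm_app_Z_mat_two_sided:
  assumes b: "\<And>N q. l < N \<Longrightarrow> q \<in> {1..N - 1} \<Longrightarrow>
      gcm_app N (ext_path d1 C1) (\<lambda>p. if p < l then b p else s) q = x q"
    and c: "\<And>N q. r < N \<Longrightarrow> q \<in> {1..N - 1} \<Longrightarrow>
      gcm_app N (ext_path d2 C2) (\<lambda>p. if p < r then c p else s) q = y q"
    and x: "\<forall>q>l. x q = 0" and y: "\<forall>q>r. y q = 0"
    and d: "1 \<le> d1" "d1 \<le> l" "1 \<le> d2" "d2 \<le> r"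
    and n: "l + r \<le> n" "n = d1 + d2 + k" and q: "q \<in> {1..n}"
  shows "gcm_app n (Z_mat d1 C1 d2 C2 k) (two_sided n l r b c s) q = x q + y (n + 1 - q)"
proof (cases "q \<le> n - r")
  case True
  have "gcm_app n (Z_mat d1 C1 d2 C2 k) (two_sided n l r b c s) q = x q"
    by (rule gcm_app_Z_mat_two_sided_left[OF b]) (use d n q True in auto)
  moreover have "y (n + 1 - q) = 0"
    using y True n q by auto
  ultimately show ?thesis
    by simp
next
  case False
  have "gcm_app n (Z_mat d1 C1 d2 C2 k) (two_sided n l r b c s) q
      = gcm_app n (Z_mat d2 C2 d1 C1 k) (two_sided n r l c b s) (n + 1 - q)"
    unfolding gcm_app_Z_mat_reflect[OF n(2) q]
    by (rule gcm_app_cong) (use two_sided_reflect n in auto)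
  also have "\<dots> = y (n + 1 - q)"
    by (rule gcm_app_Z_mat_two_sided_left[OF c]) (use d n q False in auto)
  finally show ?thesis
    using x False n by auto
qed

lemma H1_ell_less_zero:
  assumes "H1 x" "ell x < q"
  shows "x q = 0"
proof (rule ccontr)
  assume "x q \<noteq> 0"
  then have "q \<le> ell x"
    using assms(1) unfolding ell_def H1_def by (intro Max_ge) auto
  with assms(2) show False
    by simp
qed

lemma H1_sum_upto_ell:
  assumes "H1 x" "ell x \<le> l"
  shows "(\<Sum>i=1..ell x. x i * f i) = (\<Sum>i=1..l. x i * f i)"
  using assms by (intro sum.mono_neutral_left) (auto simp: H1_ell_less_zero)

lemma coprime_mult_eq_mult_obtains:
  fixes A B D1 D2 :: int
  assumes "coprime D1 D2" "D1 \<noteq> 0" "D2 * A = D1 * B"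
  obtains s where "A = s * D1" "B = s * D2"
proof -
  have "D1 dvd D2 * A"
    using assms(3) by simp
  then obtain s where "A = s * D1"
    using assms(1) by (metis coprime_dvd_mult_right_iff dvdE mult.commute)
  moreover from this have "B = s * D2"
    using assms(2,3) by (simp add: algebra_simps)
  ultimately show thesis
    by (rule that)
qed

lemma boxes_eq_0_obtains_quotient:
  assumes "extensible d1 C1" "gcd (Delta d1 C1) (Delta d2 C2) = 1" "H1 x" "H1 y"
    and "ell x \<le> l" "ell y \<le> r" "boxes d1 C1 a1 d2 C2 a2 x y = 0"
  obtains s where "(\<Sum>i=1..l. x i * a1 i) = s * Delta d1 C1" "(\<Sum>i=1..r. y i * a2 i) = s * Delta d2 C2"
proof (rule coprime_mult_eq_mult_obtains)
  show "coprime (Delta d1 C1) (Delta d2 C2)" "Delta d1 C1 \<noteq> 0"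
    using assms(1,2) by (simp_all add: coprime_iff_gcd_eq_1 extensible_def)
  show "Delta d2 C2 * (\<Sum>i=1..l. x i * a1 i) = Delta d1 C1 * (\<Sum>i=1..r. y i * a2 i)"
    using assms(7) H1_sum_upto_ell[OF assms(3,5)] H1_sum_upto_ell[OF assms(4,6)]
    by (simp add: boxes_def)
qed (rule that)

theorem proposition4p8:
  fixes d1 d2 :: nat and C1 C2 :: gcm and a1 a2 x y :: "nat \<Rightarrow> int"
  assumes X1: "marked_diagram d1 C1" and X2: "marked_diagram d2 C2"
    and ext1: "extensible d1 C1" and ext2: "extensible d2 C2"
    and cop: "gcd (Delta d1 C1) (Delta d2 C2) = 1"
    and a1: "is_a_seq d1 C1 a1" and a2: "is_a_seq d2 C2 a2"
    and hx: "H1 x" and hy: "H1 y"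
    and zero: "boxes d1 C1 a1 d2 C2 a2 x y = 0"
  shows "\<exists>(b::nat \<Rightarrow> int) (c::nat \<Rightarrow> int) (s::int).
     \<forall>k. k \<ge> max (ell x) d1 + max (ell y) d2 - d1 - d2 \<longrightarrow>
       (\<forall>q\<in>{1..d1+d2+k}. gamma_k d1 d2 k x y q =
          (\<Sum>p=1..d1+d2+k. Z_mat d1 C1 d2 C2 k q p *
             (if p \<le> max (ell x) d1 - 1 then b p
              else if d1 + d2 + k + 1 - p \<le> max (ell y) d2 - 1 then c (d1 + d2 + k + 1 - p)
              else s)))"
proof -
  let ?l = "max (ell x) d1" and ?r = "max (ell y) d2"
  \<comment> \<open>of the marked diagram hypotheses only \<open>d\<^sub>i \<ge> 1\<close> is needed\<close>
  have d: "1 \<le> d1" "1 \<le> d2"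
    using X1 X2 by (simp_all add: marked_diagram_def)
  have supp: "\<forall>q>?l. x q = 0" "\<forall>q>?r. y q = 0"
    using hx hy by (auto intro: H1_ell_less_zero)
  obtain s where s1: "(\<Sum>i=1..?l. x i * a1 i) = s * Delta d1 C1"
    and s2: "(\<Sum>i=1..?r. y i * a2 i) = s * Delta d2 C2"
    by (rule boxes_eq_0_obtains_quotient[OF ext1 cop hx hy max.cobounded1 max.cobounded1 zero])
  obtain b where b: "\<And>N q. ?l < N \<Longrightarrow> q \<in> {1..N - 1} \<Longrightarrow>
      gcm_app N (ext_path d1 C1) (\<lambda>p. if p < ?l then b p else s) q = x q"
    using ext_path_root_combination[OF d(1) max.cobounded2 ext1 a1 supp(1) s1] by blast
  obtain c where c: "\<And>N q. ?r < N \<Longrightarrow> q \<in> {1..N - 1} \<Longrightarrow>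
      gcm_app N (ext_path d2 C2) (\<lambda>p. if p < ?r then c p else s) q = y q"
    using ext_path_root_combination[OF d(2) max.cobounded2 ext2 a2 supp(2) s2] by blast
  show ?thesis
  proof (intro exI allI impI ballI)
    fix k q assume k: "?l + ?r - d1 - d2 \<le> k" and q: "q \<in> {1..d1 + d2 + k}"
    have "gcm_app (d1 + d2 + k) (Z_mat d1 C1 d2 C2 k) (two_sided (d1 + d2 + k) ?l ?r b c s) q
        = x q + y (d1 + d2 + k + 1 - q)"
      by (rule gcm_app_Z_mat_two_sided[OF b c supp]) (use d k q in auto)
    then show "gamma_k d1 d2 k x y q = (\<Sum>p=1..d1+d2+k. Z_mat d1 C1 d2 C2 k q p *
        (if p \<le> ?l - 1 then b p
         else if d1 + d2 + k + 1 - p \<le> ?r - 1 then c (d1 + d2 + k + 1 - p) else s))"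
      by (simp add: gamma_k_def gcm_app_def two_sided_def)
  qed
qed

end
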